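(* Let $m$ be an even positive integer. Then 1) $\Gamma_0(2)^+\begin{bmatrix}1&0\\0&m\end{bmatrix}\Gamma_0(2)=\bigcup_{\gamma\in M_1^m}\Gamma_0(2)^+\gamma$; 2) $\Gamma_0(2)^+\begin{bmatrix}m&0\\0&1\end{bmatrix}\Gamma_0(2)=\bigcup_{\gamma\in M_2^m}\Gamma_0(2)^+\gamma$; 3) $\Gamma_0(2)^+\begin{bmatrix}m&0\\0&1\end{bmatrix}\Gamma_0(2)^+=\Gamma_0(2)^+\begin{bmatrix}1&0\\0&m\end{bmatrix}\Gamma_0(2)^+=\bigcup_{\gamma\in M^m}\Gamma_0(2)^+\gamma$.
   Context: Matrices are elements of $GL_2^+(\mathbb{R})$ considered up to sign. $\Gamma_0(2)=\{\begin{bmatrix}a&b\\c&d\end{bmatrix}\in SL_2(\mathbb{Z}): c\equiv0 \pmod 2\}$, $w_2=2^{-1/2}\begin{bmatrix}0&-1\\2&0\end{bmatrix}$, and $\Gamma_0(2)^+=\Gamma_0(2)\cup\Gamma_0(2)w_2$ is the group generated by $\Gamma_0(2)$ and $w_2$. For a positive integer $m$: $M_1^m=\{\begin{bmatrix}x&y\\0&z\end{bmatrix}: x,y,z\in\mathbb{Z},\ xz=m,\ 0\leq y<z,\ \gcd(x,y,z)=1,\ x\text{ odd}\}$; $S_1^m=\{\begin{bmatrix}x&y\\0&z\end{bmatrix}: xz=m,\ 0\leq y<z,\ \gcd(x,y,z)=1,\ z\text{ odd}\}$; $S_2^m=\{2^{-1/2}\begin{bmatrix}x&y\\0&z\end{bmatrix}: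 xz=2m,\ 0\leq y<z,\ \gcd(x,y,z)=1,\ x,z\text{ even}\}$; $M_2^m=S_1^m\cup S_2^m$, $M^m=M_1^m\cup M_2^m$ (integers $x,y,z$, $x,z>0$). *)

theory Defs
  imports "HOL-Analysis.Analysis"
begin

definition mat2 :: "real \<Rightarrow> real \<Rightarrow> real \<Rightarrow> real \<Rightarrow> real^2^2" where
  "mat2 a b c d = vector [vector [a, b], vector [c, d]]"

definition Gamma0_2 :: "(real^2^2) set" where
  "Gamma0_2 = {mat2 (of_int a) (of_int b) (of_int c) (of_int d) | a b c d :: int.
                  a * d - b * c = 1 \<and> even c}"

definition w2 :: "real^2^2" where
  "w2 = (1 / sqrt 2) *\<^sub>R mat2 0 (-1) 2 0"

definition Gamma0_2_plus :: "(real^2^2) set" where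
  "Gamma0_2_plus = Gamma0_2 \<union> {g ** w2 | g. g \<in> Gamma0_2}"

definition right_coset :: "(real^2^2) set \<Rightarrow> real^2^2 \<Rightarrow> (real^2^2) set" where
  "right_coset G a = {g ** a | g. g \<in> G}"

definition double_coset :: "(real^2^2) set \<Rightarrow> real^2^2 \<Rightarrow> (real^2^2) set \<Rightarrow> (real^2^2) set" where
  "double_coset G a H = {g ** a ** h | g h. g \<in> G \<and> h \<in> H}"

definition M1 :: "int \<Rightarrow> (real^2^2) set" where
  "M1 m = {mat2 (of_int x) (of_int y) 0 (of_int z) | x y z :: int.
             x > 0 \<and> z > 0 \<and> x * z = m \<and> 0 \<le> y \<and> y < z \<and> gcd (gcd x y) z = 1 \<and> odd x}"

definition S1 :: "int \<Rightarrow> (real^2^2) set" where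
  "S1 m = {mat2 (of_int x) (of_int y) 0 (of_int z) | x y z :: int.
             x > 0 \<and> z > 0 \<and> x * z = m \<and> 0 \<le> y \<and> y < z \<and> gcd (gcd x y) z = 1 \<and> odd z}"

definition S2 :: "int \<Rightarrow> (real^2^2) set" where
  "S2 m = {(1 / sqrt 2) *\<^sub>R mat2 (of_int x) (of_int y) 0 (of_int z) | x y z :: int.
             x > 0 \<and> z > 0 \<and> x * z = 2 * m \<and> 0 \<le> y \<and> y < z \<and> gcd (gcd x y) z = 1
             \<and> even x \<and> even z}"

definition M2 :: "int \<Rightarrow> (real^2^2) set" where
  "M2 m = S1 m \<union> S2 m"

definition Mm :: "int \<Rightarrow> (real^2^2) set" where
  "Mm m = M1 m \<union> M2 m"

end

theory Submission
  imports Defs "HOL-Computational_Algebra.Primes"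
begin

text \<open>
  Everything reduces to integer matrices.  Left multiplication by \<open>\<Gamma>\<^sub>0(2)\<close> brings a primitive
  integer matrix of determinant \<open>m\<close> with first column \<open>(a, c)\<close> to the Hermite normal form
  \<open>(gcd a c, y; 0, z)\<close>, \<open>0 \<le> y < z\<close>, provided \<open>c / gcd a c\<close> is even; this produces the
  representatives \<open>M\<^sub>1\<close> and \<open>S\<^sub>1\<close>.  If \<open>c / gcd a c\<close> is odd, one first multiplies by
  \<open>\<surd>2 w\<^sub>2 = (0, -1; 2, 0)\<close>, which produces \<open>S\<^sub>2\<close>.  Conversely every such normal form lies in
  \<open>\<Gamma>\<^sub>0(2) diag(1, m) \<Gamma>\<^sub>0(2)\<close>: after a prime-avoiding right multiplication its first column
  becomes coprime and can be cleared; the case \<open>diag(m, 1)\<close> follows by taking adjugates.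
  Finally \<open>\<Gamma>\<^sub>0(2)\<^sup>+ = \<Gamma>\<^sub>0(2) \<union> \<Gamma>\<^sub>0(2) w\<^sub>2\<close> and \<open>w\<^sub>2\<close> interchanges \<open>diag(1, m)\<close> and
  \<open>diag(m, 1)\<close>, so both \<open>\<Gamma>\<^sub>0(2)\<^sup>+\<close>-double cosets are the union of the two \<open>\<Gamma>\<^sub>0(2)\<close>-ones.
\<close>

section \<open>Integer matrices and \<open>\<Gamma>\<^sub>0(2)\<close>\<close>

type_synonym imat = "int \<times> int \<times> int \<times> int"

fun imat_mult :: "imat \<Rightarrow> imat \<Rightarrow> imat" where
  "imat_mult (a, b, c, d) (a', b', c', d') =
     (a * a' + b * c', a * b' + b * d', c * a' + d * c', c * b' + d * d')"

fun imat_det :: "imat \<Rightarrow> int" where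
  "imat_det (a, b, c, d) = a * d - b * c"

fun imat_adj :: "imat \<Rightarrow> imat" where
  "imat_adj (a, b, c, d) = (d, -b, -c, a)"

fun dvd_entries :: "int \<Rightarrow> imat \<Rightarrow> bool" where
  "dvd_entries k (a, b, c, d) \<longleftrightarrow> k dvd a \<and> k dvd b \<and> k dvd c \<and> k dvd d"

definition primitive :: "imat \<Rightarrow> bool" where
  "primitive A \<longleftrightarrow> (\<forall>k. dvd_entries k A \<longrightarrow> is_unit k)"

definition Gamma0_2_int :: "imat set" where
  "Gamma0_2_int = {(a, b, c, d). a * d - b * c = 1 \<and> even c}"

lemma Gamma0_2_int_iff [simp]: "(a, b, c, d) \<in> Gamma0_2_int \<longleftrightarrow> a * d - b * c = 1 \<and> even c"
  by (simp add: Gamma0_2_int_def)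

lemma imat_mult_assoc: "imat_mult (imat_mult A B) C = imat_mult A (imat_mult B C)"
  by (cases A rule: prod_cases4; cases B rule: prod_cases4; cases C rule: prod_cases4)
     (simp add: algebra_simps)

lemma imat_mult_one_left [simp]: "imat_mult (1, 0, 0, 1) A = A"
  by (cases A rule: prod_cases4) simp

lemma imat_mult_one_right [simp]: "imat_mult A (1, 0, 0, 1) = A"
  by (cases A rule: prod_cases4) simp

lemma imat_det_mult: "imat_det (imat_mult A B) = imat_det A * imat_det B"
  by (cases A rule: prod_cases4; cases B rule: prod_cases4) (simp add: algebra_simps)

lemma imat_adj_mult: "imat_adj (imat_mult A B) = imat_mult (imat_adj B) (imat_adj A)"
  by (cases A rule: prod_cases4; cases B rule: prod_cases4) (simp add: algebra_simps)

lemma imat_adj_mult_self: "imat_mult (imat_adj A) A = (imat_det A, 0, 0, imat_det A)"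
  by (cases A rule: prod_cases4) (simp add: algebra_simps)

lemma imat_mult_adj_self: "imat_mult A (imat_adj A) = (imat_det A, 0, 0, imat_det A)"
  by (cases A rule: prod_cases4) (simp add: algebra_simps)

lemma imat_adj_mult_cancel_left:
  "imat_det A = 1 \<Longrightarrow> imat_mult (imat_adj A) (imat_mult A X) = X"
  by (simp add: imat_mult_assoc [symmetric] imat_adj_mult_self)

lemma imat_mult_adj_cancel_right:
  "imat_det A = 1 \<Longrightarrow> imat_mult (imat_mult X A) (imat_adj A) = X"
  by (simp add: imat_mult_assoc imat_mult_adj_self)

lemma Gamma0_2_int_det: "A \<in> Gamma0_2_int \<Longrightarrow> imat_det A = 1"
  by (cases A rule: prod_cases4) simp

lemma Gamma0_2_int_mult:
  assumes "A \<in> Gamma0_2_int" and "B \<in> Gamma0_2_int"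
  shows "imat_mult A B \<in> Gamma0_2_int"
proof -
  have "imat_det (imat_mult A B) = 1"
    using assms by (simp add: imat_det_mult Gamma0_2_int_det)
  then show ?thesis
    using assms by (cases A rule: prod_cases4, cases B rule: prod_cases4) simp
qed

lemma Gamma0_2_int_adj: "A \<in> Gamma0_2_int \<Longrightarrow> imat_adj A \<in> Gamma0_2_int"
  by (cases A rule: prod_cases4) (simp add: algebra_simps)

lemma Gamma0_2_int_odd_diagonal:
  assumes "(a, b, c, d) \<in> Gamma0_2_int"
  shows "odd a" and "odd d"
proof -
  have "odd (a * d)"
    using assms by (metis Gamma0_2_int_iff diff_add_cancel even_add even_mult_iff odd_one)
  then show "odd a" and "odd d"
    by simp_all
qed

lemma Gamma0_2_int_mult_parity:
  assumes "g \<in> Gamma0_2_int" and "even c" and "imat_mult g (a, b, c, d) = (a', b', c', d')"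
  shows "even c'" and "odd a' \<longleftrightarrow> odd a" and "odd d' \<longleftrightarrow> odd d"
proof -
  obtain p q r s where g: "g = (p, q, r, s)"
    by (cases g rule: prod_cases4)
  with assms(1) have "(p, q, r, s) \<in> Gamma0_2_int"
    by simp
  then have "even r" "odd p" "odd s"
    using Gamma0_2_int_odd_diagonal [of p q r s] by simp_all
  moreover have "a' = p * a + q * c" "c' = r * a + s * c" "d' = r * b + s * d"
    using assms(3) by (simp_all add: g)
  ultimately show "even c'" "odd a' \<longleftrightarrow> odd a" "odd d' \<longleftrightarrow> odd d"
    using \<open>even c\<close> by simp_all
qed

lemma dvd_entries_mult_left: "dvd_entries k B \<Longrightarrow> dvd_entries k (imat_mult A B)"
  by (cases A rule: prod_cases4; cases B rule: prod_cases4) simp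

lemma primitive_mult_left:
  assumes "imat_det g = 1" and "primitive A"
  shows "primitive (imat_mult g A)"
  unfolding primitive_def
proof (intro allI impI)
  fix k assume "dvd_entries k (imat_mult g A)"
  then have "dvd_entries k (imat_mult (imat_adj g) (imat_mult g A))"
    by (rule dvd_entries_mult_left)
  then show "is_unit k"
    using assms by (simp add: imat_adj_mult_cancel_left primitive_def)
qed

lemma primitive_upper_iff: "primitive (x, y, 0, z) \<longleftrightarrow> gcd (gcd x y) z = 1"
proof
  assume "primitive (x, y, 0, z)"
  moreover have "dvd_entries (gcd (gcd x y) z) (x, y, 0, z)"
    by (meson dvd_0_right dvd_entries.simps dvd_trans gcd_dvd1 gcd_dvd2)
  ultimately have "is_unit (gcd (gcd x y) z)"
    unfolding primitive_def by blast
  then show "gcd (gcd x y) z = 1"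
    by simp
next
  assume "gcd (gcd x y) z = 1"
  then show "primitive (x, y, 0, z)"
    unfolding primitive_def by (metis dvd_entries.simps gcd_greatest is_unit_gcd)
qed

lemma dvd_entries_adj_iff [simp]: "dvd_entries k (imat_adj A) \<longleftrightarrow> dvd_entries k A"
  by (cases A rule: prod_cases4) auto

lemma primitive_adj_iff: "primitive (imat_adj A) \<longleftrightarrow> primitive A"
  by (simp add: primitive_def)

definition int_double_coset :: "imat \<Rightarrow> imat set" where
  "int_double_coset D =
     {imat_mult (imat_mult g D) h | g h. g \<in> Gamma0_2_int \<and> h \<in> Gamma0_2_int}"

lemma int_double_coset_I:
  "g \<in> Gamma0_2_int \<Longrightarrow> h \<in> Gamma0_2_int \<Longrightarrow> imat_mult (imat_mult g D) h \<in> int_double_coset D"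
  unfolding int_double_coset_def by blast

lemma int_double_coset_E:
  assumes "A \<in> int_double_coset D"
  obtains g h where "g \<in> Gamma0_2_int" and "h \<in> Gamma0_2_int" and "A = imat_mult (imat_mult g D) h"
  using assms unfolding int_double_coset_def by blast

lemma int_double_coset_self: "D \<in> int_double_coset D"
  using int_double_coset_I [of "(1, 0, 0, 1)" "(1, 0, 0, 1)" D] by simp

lemma int_double_coset_mult_left_iff:
  assumes g: "g \<in> Gamma0_2_int"
  shows "imat_mult g A \<in> int_double_coset D \<longleftrightarrow> A \<in> int_double_coset D"
proof
  assume "imat_mult g A \<in> int_double_coset D"
  then obtain g' h where g': "g' \<in> Gamma0_2_int" and h: "h \<in> Gamma0_2_int"
    and gA: "imat_mult g A = imat_mult (imat_mult g' D) h"
    by (rule int_double_coset_E)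
  have "A = imat_mult (imat_adj g) (imat_mult g A)"
    using g by (simp add: imat_adj_mult_cancel_left Gamma0_2_int_det)
  also have "\<dots> = imat_mult (imat_mult (imat_mult (imat_adj g) g') D) h"
    by (simp add: gA imat_mult_assoc)
  finally show "A \<in> int_double_coset D"
    using g g' h by (simp add: int_double_coset_I Gamma0_2_int_mult Gamma0_2_int_adj)
next
  assume "A \<in> int_double_coset D"
  then obtain g' h where "g' \<in> Gamma0_2_int" "h \<in> Gamma0_2_int" "A = imat_mult (imat_mult g' D) h"
    by (rule int_double_coset_E)
  then show "imat_mult g A \<in> int_double_coset D"
    using g int_double_coset_I [of "imat_mult g g'" h D]
    by (simp add: imat_mult_assoc Gamma0_2_int_mult)
qed

lemma int_double_coset_mult_right_iff:
  assumes h: "h \<in> Gamma0_2_int"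
  shows "imat_mult A h \<in> int_double_coset D \<longleftrightarrow> A \<in> int_double_coset D"
proof
  assume "imat_mult A h \<in> int_double_coset D"
  then obtain g h' where g: "g \<in> Gamma0_2_int" and h': "h' \<in> Gamma0_2_int"
    and Ah: "imat_mult A h = imat_mult (imat_mult g D) h'"
    by (rule int_double_coset_E)
  have "A = imat_mult (imat_mult A h) (imat_adj h)"
    using h by (simp add: imat_mult_adj_cancel_right Gamma0_2_int_det)
  also have "\<dots> = imat_mult (imat_mult g D) (imat_mult h' (imat_adj h))"
    by (simp add: Ah imat_mult_assoc)
  finally show "A \<in> int_double_coset D"
    using g h h' by (simp add: int_double_coset_I Gamma0_2_int_mult Gamma0_2_int_adj)
next
  assume "A \<in> int_double_coset D"
  then obtain g h' where "g \<in> Gamma0_2_int" "h' \<in> Gamma0_2_int" "A = imat_mult (imat_mult g D) h'"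
    by (rule int_double_coset_E)
  then show "imat_mult A h \<in> int_double_coset D"
    using h int_double_coset_I [of g "imat_mult h' h" D]
    by (simp add: imat_mult_assoc Gamma0_2_int_mult)
qed

lemma int_double_coset_adj:
  assumes "A \<in> int_double_coset D"
  shows "imat_adj A \<in> int_double_coset (imat_adj D)"
proof -
  obtain g h where "g \<in> Gamma0_2_int" "h \<in> Gamma0_2_int" "A = imat_mult (imat_mult g D) h"
    using assms by (rule int_double_coset_E)
  then show ?thesis
    using int_double_coset_I [of "imat_adj h" "imat_adj g" "imat_adj D"]
    by (simp add: imat_adj_mult imat_mult_assoc Gamma0_2_int_adj)
qed

section \<open>Hermite and Smith forms over \<open>\<Gamma>\<^sub>0(2)\<close>\<close>

lemma Gamma0_2_int_triangularize:
  assumes "a \<noteq> 0 \<or> c \<noteq> 0" and "even (c div gcd a c)"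
  obtains g y z where "g \<in> Gamma0_2_int" and "imat_mult g (a, b, c, d) = (gcd a c, y, 0, z)"
proof -
  define e where "e = gcd a c"
  define a1 c1 where "a1 = a div e" and "c1 = c div e"
  have e: "e \<noteq> 0" "a = a1 * e" "c = c1 * e"
    using assms(1) by (simp_all add: e_def a1_def c1_def)
  obtain u v where "u * a + v * c = e"
    using bezout_int e_def by metis
  then have "(u * a1 + v * c1) * e = 1 * e"
    using e by (simp add: algebra_simps)
  then have "u * a1 + v * c1 = 1"
    using e(1) mult_right_cancel by blast
  then have "(u, v, -c1, a1) \<in> Gamma0_2_int"
    using assms(2) by (simp add: c1_def e_def)
  moreover have "imat_mult (u, v, -c1, a1) (a, b, c, d) = (e, u * b + v * d, 0, a1 * d - c1 * b)"
    using \<open>u * a + v * c = e\<close> e by (simp add: algebra_simps)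
  ultimately show ?thesis
    using that e_def by blast
qed

definition hermite_form :: "int \<Rightarrow> int \<Rightarrow> int \<Rightarrow> int \<Rightarrow> bool" where
  "hermite_form m x y z \<longleftrightarrow>
     x > 0 \<and> z > 0 \<and> x * z = m \<and> 0 \<le> y \<and> y < z \<and> gcd (gcd x y) z = 1"

lemma Gamma0_2_int_hermite_form:
  assumes det: "imat_det (a, b, c, d) = m" and "m > 0" and prim: "primitive (a, b, c, d)"
    and "even (c div gcd a c)"
  obtains g y z where "g \<in> Gamma0_2_int" and "imat_mult g (a, b, c, d) = (gcd a c, y, 0, z)"
    and "hermite_form m (gcd a c) y z"
proof -
  have "a \<noteq> 0 \<or> c \<noteq> 0"
    using det \<open>m > 0\<close> by auto
  then obtain g1 y0 z where g1: "g1 \<in> Gamma0_2_int"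
    and upper: "imat_mult g1 (a, b, c, d) = (gcd a c, y0, 0, z)"
    using Gamma0_2_int_triangularize assms(4) by metis
  have "gcd a c * z = m"
    using imat_det_mult [of g1 "(a, b, c, d)"] det g1 upper by (simp add: Gamma0_2_int_det)
  moreover have "gcd a c > 0"
    using \<open>a \<noteq> 0 \<or> c \<noteq> 0\<close> by simp
  ultimately have "z > 0"
    using \<open>m > 0\<close> by (metis zero_less_mult_pos)
  define g where "g = imat_mult (1, -(y0 div z), 0, 1) g1"
  have g: "g \<in> Gamma0_2_int"
    unfolding g_def using g1 by (simp add: Gamma0_2_int_mult)
  have reduced: "imat_mult g (a, b, c, d) = (gcd a c, y0 mod z, 0, z)"
    using \<open>z > 0\<close> by (simp add: g_def imat_mult_assoc upper minus_div_mult_eq_mod [symmetric])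
  have "gcd (gcd (gcd a c) (y0 mod z)) z = 1"
    using primitive_mult_left [OF Gamma0_2_int_det [OF g] prim] reduced
    by (simp add: primitive_upper_iff)
  then show ?thesis
    using that g reduced \<open>gcd a c * z = m\<close> \<open>gcd a c > 0\<close> \<open>z > 0\<close>
    by (simp add: hermite_form_def)
qed

lemma Gamma0_2_int_hermite_form_odd:
  assumes "imat_det (a, b, c, d) = m" and "m > 0" and "primitive (a, b, c, d)"
    and "odd a" and "even c"
  obtains g x y z where "g \<in> Gamma0_2_int" and "imat_mult g (a, b, c, d) = (x, y, 0, z)"
    and "hermite_form m x y z" and "odd x"
proof -
  have "odd (gcd a c)"
    using \<open>odd a\<close> by (meson dvd_trans gcd_dvd1)
  moreover have "c = c div gcd a c * gcd a c"
    by simp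
  ultimately have "even (c div gcd a c)"
    using \<open>even c\<close> by (metis even_mult_iff)
  then show ?thesis
    using Gamma0_2_int_hermite_form assms(1-3) that \<open>odd (gcd a c)\<close> by metis
qed

lemma gcd_double_eq_gcd:
  fixes a c :: int
  assumes "odd (c div gcd a c)"
  shows "gcd c (2 * a) = gcd a c"
proof -
  define e where "e = gcd a c"
  define a1 c1 where "a1 = a div e" and "c1 = c div e"
  have "a \<noteq> 0 \<or> c \<noteq> 0"
    using assms by auto
  then have e: "e > 0" "a = a1 * e" "c = c1 * e" and "coprime a1 c1"
    by (simp_all add: e_def a1_def c1_def div_gcd_coprime)
  have "odd c1"
    using assms by (simp add: c1_def e_def)
  have "gcd c (2 * a) = gcd c1 (2 * a1) * e"
    using e gcd_mult_distrib_int [of e c1 "2 * a1"] by (simp add: ac_simps)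
  also have "gcd c1 (2 * a1) = 1"
    using \<open>odd c1\<close> \<open>coprime a1 c1\<close>
    by (simp add: gcd_mult_right_left_cancel coprime_commute coprime_iff_gcd_eq_1 [symmetric])
  finally show ?thesis
    by (simp add: e_def)
qed

lemma primitive_w2_mult:
  assumes "odd d" and "primitive (a, b, c, d)"
  shows "primitive (imat_mult (0, -1, 2, 0) (a, b, c, d))"
  unfolding primitive_def
proof (intro allI impI)
  fix k assume k: "dvd_entries k (imat_mult (0, -1, 2, 0) (a, b, c, d))"
  then have "coprime k 2"
    using \<open>odd d\<close> by (simp add: coprime_commute) (meson dvd_minus_iff dvd_trans)
  then have "dvd_entries k (a, b, c, d)"
    using k by (simp add: coprime_dvd_mult_right_iff)
  then show "is_unit k"
    using assms(2) by (simp add: primitive_def)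
qed

lemma Gamma0_2_int_hermite_form_w2:
  assumes det: "imat_det (a, b, c, d) = m" and "m > 0" and "primitive (a, b, c, d)"
    and "even c" and "odd d" and "odd (c div gcd a c)"
  obtains g x y z where "g \<in> Gamma0_2_int"
    and "imat_mult g (imat_mult (0, -1, 2, 0) (a, b, c, d)) = (x, y, 0, z)"
    and "hermite_form (2 * m) x y z" and "even x" and "even z"
proof -
  have W: "imat_mult (0, -1, 2, 0) (a, b, c, d) = (-c, -d, 2 * a, 2 * b)"
    by simp
  have gcd: "gcd (-c) (2 * a) = gcd a c"
    using gcd_double_eq_gcd [OF assms(6)] by simp
  have "imat_det (-c, -d, 2 * a, 2 * b) = 2 * m"
    using det by (simp add: algebra_simps)
  moreover have "2 * m > 0"
    using \<open>m > 0\<close> by simp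
  moreover have "primitive (-c, -d, 2 * a, 2 * b)"
    using primitive_w2_mult [OF \<open>odd d\<close> assms(3)] W by simp
  moreover have "even (2 * a div gcd (-c) (2 * a))"
    unfolding gcd using div_mult_swap [of "gcd a c" a 2] by (metis dvd_triv_left gcd_dvd1)
  ultimately obtain g y z where g: "g \<in> Gamma0_2_int"
    and upper: "imat_mult g (-c, -d, 2 * a, 2 * b) = (gcd (-c) (2 * a), y, 0, z)"
    and "hermite_form (2 * m) (gcd (-c) (2 * a)) y z"
    by (rule Gamma0_2_int_hermite_form)
  moreover have "even (gcd a c)"
    using \<open>even c\<close> assms(6) by (metis dvd_mult_div_cancel even_mult_iff gcd_dvd2)
  moreover have "even z"
    using Gamma0_2_int_mult_parity(3) [OF g _ upper] by simp
  ultimately show ?thesis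
    using that W unfolding gcd by metis
qed

lemma exists_coprime_linear_shift:
  fixes a b n :: int
  assumes "gcd (gcd a b) n = 1" and "n \<noteq> 0"
  shows "\<exists>t. coprime (a * t + b) n"
proof -
  define P where "P = {p \<in> prime_factors n. \<not> p dvd b}"
  define t where "t = \<Prod>P"
  have "\<not> p dvd a * t + b" if p: "prime p" "p dvd n" for p
  proof
    assume p_dvd: "p dvd a * t + b"
    have p_factor: "p \<in> prime_factors n"
      using p assms(2) by (simp add: in_prime_factors_iff)
    show False
    proof (cases "p dvd b")
      case True
      then have "p dvd a \<or> p dvd t"
        using p_dvd p(1) by (simp add: dvd_add_left_iff prime_dvd_mult_iff)
      moreover have "\<not> p dvd a"
        using True p assms(1) by (metis gcd_greatest is_unit_gcd not_prime_unit)
      moreover have "\<not> p dvd t"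
      proof
        assume "p dvd t"
        then obtain q where "q \<in> P" "p dvd q"
          using p(1) by (auto simp: t_def P_def prime_dvd_prod_iff)
        then have "p = q"
          using p(1) by (auto simp: P_def in_prime_factors_iff primes_dvd_imp_eq)
        with \<open>q \<in> P\<close> True show False
          by (simp add: P_def)
      qed
      ultimately show False
        by blast
    next
      case False
      then have "p dvd t"
        using p_factor by (auto simp: t_def P_def intro: dvd_prodI)
      then show False
        using p_dvd False by (simp add: dvd_add_right_iff)
    qed
  qed
  moreover have "\<not> coprime (a * t + b) n \<Longrightarrow> \<exists>p. prime p \<and> p dvd gcd (a * t + b) n"
    using assms(2) prime_divisor_exists [of "gcd (a * t + b) n"] by (auto simp: is_unit_gcd)
  ultimately have "coprime (a * t + b) n"
    by auto
  then show ?thesis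
    by blast
qed

text \<open>The Smith form over \<open>\<Gamma>\<^sub>0(2)\<close>: a right multiplication by \<open>(t, (t-1)/2, 2, 1)\<close> makes the
  first column \<open>(x t + 2 y, 2 z)\<close> coprime, after which \<open>\<Gamma>\<^sub>0(2)\<close> clears it to \<open>(1, 0)\<close>.\<close>

lemma upper_in_int_double_coset:
  assumes "odd x" and "even z" and "z \<noteq> 0" and "gcd (gcd x y) z = 1"
  shows "(x, y, 0, z) \<in> int_double_coset (1, 0, 0, x * z)"
proof -
  have "gcd x (2 * y) = gcd x y"
    using \<open>odd x\<close> by (simp add: gcd_mult_right_left_cancel coprime_commute)
  then obtain t where coprime: "coprime (x * t + 2 * y) z"
    using exists_coprime_linear_shift [of x "2 * y" z] assms(3,4) by auto
  define u where "u = x * t + 2 * y"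
  have "odd u"
    using coprime \<open>even z\<close> by (metis u_def coprime_common_divisor odd_one)
  then have "odd t"
    by (simp add: u_def)
  then obtain t1 where t1: "t = 2 * t1 + 1"
    by (rule oddE)
  define h1 :: imat where "h1 = (t, t1, 2, 1)"
  have h1: "h1 \<in> Gamma0_2_int"
    using t1 by (simp add: h1_def)
  have B: "imat_mult (x, y, 0, z) h1 = (u, x * t1 + y, 2 * z, z)"
    by (simp add: h1_def u_def algebra_simps)
  have "gcd u (2 * z) = 1"
    using coprime \<open>odd u\<close> by (simp add: u_def coprime_commute coprime_iff_gcd_eq_1 [symmetric])
  moreover have "u \<noteq> 0"
    using \<open>odd u\<close> by auto
  moreover have "even (2 * z div gcd u (2 * z))"
    using \<open>gcd u (2 * z) = 1\<close> by simp
  ultimately obtain g y' z' where g: "g \<in> Gamma0_2_int"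
    and upper: "imat_mult g (u, x * t1 + y, 2 * z, z) = (1, y', 0, z')"
    using Gamma0_2_int_triangularize [of u "2 * z" "x * t1 + y" z] by metis
  have "z' = x * z"
    using imat_det_mult [of g "(u, x * t1 + y, 2 * z, z)"] upper g t1
    by (simp add: Gamma0_2_int_det u_def algebra_simps)
  then have "imat_mult (imat_mult g (imat_mult (x, y, 0, z) h1)) (1, -y', 0, 1) = (1, 0, 0, x * z)"
    by (simp add: B upper)
  then have "imat_mult (imat_mult g (imat_mult (x, y, 0, z) h1)) (1, -y', 0, 1)
      \<in> int_double_coset (1, 0, 0, x * z)"
    by (simp add: int_double_coset_self)
  then show ?thesis
    using g h1 by (simp add: int_double_coset_mult_left_iff int_double_coset_mult_right_iff)
qed

lemma primitive_in_int_double_coset_1_m: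
  assumes "imat_det (a, b, c, d) = m" and "m > 0" and "even m" and "primitive (a, b, c, d)"
    and "odd a" and "even c"
  shows "(a, b, c, d) \<in> int_double_coset (1, 0, 0, m)"
proof -
  obtain g x y z where g: "g \<in> Gamma0_2_int" and upper: "imat_mult g (a, b, c, d) = (x, y, 0, z)"
    and hf: "hermite_form m x y z" and "odd x"
    using Gamma0_2_int_hermite_form_odd assms(1,2,4-6) by metis
  have "even z" "z \<noteq> 0"
    using hf \<open>odd x\<close> \<open>even m\<close> by (auto simp: hermite_form_def)
  then have "(x, y, 0, z) \<in> int_double_coset (1, 0, 0, m)"
    using upper_in_int_double_coset \<open>odd x\<close> hf by (auto simp: hermite_form_def)
  then show ?thesis
    using g upper int_double_coset_mult_left_iff by metis
qed

lemma primitive_in_int_double_coset_m_1: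
  assumes "imat_det (a, b, c, d) = m" and "m > 0" and "even m" and "primitive (a, b, c, d)"
    and "even c" and "odd d"
  shows "(a, b, c, d) \<in> int_double_coset (m, 0, 0, 1)"
proof -
  have "(d, -b, -c, a) \<in> int_double_coset (1, 0, 0, m)"
    using primitive_in_int_double_coset_1_m [of d "-b" "-c" a m] assms primitive_adj_iff [of "(a, b, c, d)"]
    by (simp add: algebra_simps)
  then show ?thesis
    using int_double_coset_adj by fastforce
qed

section \<open>Real matrices and \<open>\<Gamma>\<^sub>0(2)\<^sup>+\<close>\<close>

fun of_imat :: "imat \<Rightarrow> real^2^2" where
  "of_imat (a, b, c, d) = mat2 (of_int a) (of_int b) (of_int c) (of_int d)"

declare of_imat.simps [simp del]

lemma mat2_mult:
  "mat2 a b c d ** mat2 a' b' c' d' =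
     mat2 (a * a' + b * c') (a * b' + b * d') (c * a' + d * c') (c * b' + d * d')"
  unfolding mat2_def by (simp add: vec_eq_iff forall_2 matrix_matrix_mult_def sum_2)

lemma mat2_scaleR: "r *\<^sub>R mat2 a b c d = mat2 (r * a) (r * b) (r * c) (r * d)"
  unfolding mat2_def by (simp add: vec_eq_iff forall_2)

lemma mat2_eq_iff: "mat2 a b c d = mat2 a' b' c' d' \<longleftrightarrow> a = a' \<and> b = b' \<and> c = c' \<and> d = d'"
  unfolding mat2_def by (auto simp: vec_eq_iff forall_2)

lemma of_imat_one: "of_imat (1, 0, 0, 1) = mat 1"
  unfolding of_imat.simps mat2_def by (simp add: vec_eq_iff forall_2 mat_def)

lemma of_imat_mult: "of_imat A ** of_imat B = of_imat (imat_mult A B)"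
  by (cases A rule: prod_cases4; cases B rule: prod_cases4) (simp add: of_imat.simps mat2_mult)

lemma of_imat_mult_scaleR: "of_imat A ** (r *\<^sub>R of_imat B) = r *\<^sub>R of_imat (imat_mult A B)"
  by (cases A rule: prod_cases4; cases B rule: prod_cases4)
     (simp add: of_imat.simps mat2_mult mat2_scaleR algebra_simps)

lemma w2_eq: "w2 = mat2 0 (-1 / sqrt 2) (2 / sqrt 2) 0"
  unfolding w2_def mat2_scaleR by simp

lemma w2_mult_w2: "w2 ** w2 = of_imat (-1, 0, 0, -1)"
  unfolding w2_eq by (simp add: of_imat.simps mat2_mult mat2_eq_iff)

lemma mat2_uminus: "- mat2 a b c d = mat2 (- a) (- b) (- c) (- d)"
  unfolding mat2_def by (simp add: vec_eq_iff forall_2)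

lemma minus_w2_eq: "- w2 = of_imat (-1, 0, 0, -1) ** w2"
  unfolding w2_eq mat2_uminus by (simp add: of_imat.simps mat2_mult)

lemma minus_w2_cancel: "(- w2) ** (w2 ** X) = X"
proof -
  have "(- w2) ** w2 = mat 1"
    unfolding minus_w2_eq by (simp add: matrix_mul_assoc [symmetric] w2_mult_w2 of_imat_mult of_imat_one)
  then show ?thesis
    by (simp add: matrix_mul_assoc)
qed

lemma w2_mult_of_imat: "w2 ** of_imat A = (1 / sqrt 2) *\<^sub>R of_imat (imat_mult (0, -1, 2, 0) A)"
  by (cases A rule: prod_cases4) (simp add: of_imat.simps w2_eq mat2_mult mat2_scaleR)

lemma w2_mult_scaled_upper:
  assumes "even z"
  shows "w2 ** ((1 / sqrt 2) *\<^sub>R of_imat (x, y, 0, z)) = of_imat (0, -(z div 2), x, y)"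
proof -
  obtain z' where "z = 2 * z'"
    using assms by blast
  then show ?thesis
    by (simp add: of_imat.simps w2_eq mat2_scaleR mat2_mult mat2_eq_iff)
qed

lemma w2_conjugate_Gamma0_2_int:
  assumes "A \<in> Gamma0_2_int"
  shows "\<exists>B\<in>Gamma0_2_int. of_imat A ** w2 = w2 ** of_imat B \<and> w2 ** of_imat A = of_imat B ** w2"
proof -
  obtain a b c d where A: "A = (a, b, 2 * c, d)" and det: "a * d - b * (2 * c) = 1"
    using assms by (cases A rule: prod_cases4) (auto elim!: evenE)
  have "(d, -c, -2 * b, a) \<in> Gamma0_2_int"
    using det by (simp add: algebra_simps)
  moreover have "of_imat A ** w2 = w2 ** of_imat (d, -c, -2 * b, a)"
    and "w2 ** of_imat A = of_imat (d, -c, -2 * b, a) ** w2"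
    by (simp_all add: A of_imat.simps w2_eq mat2_mult mat2_eq_iff)
  ultimately show ?thesis
    by blast
qed

lemma Gamma0_2_eq: "Gamma0_2 = of_imat ` Gamma0_2_int"
  unfolding Gamma0_2_def Gamma0_2_int_def by (force simp: of_imat.simps)

lemma Gamma0_2_plus_iff:
  "g \<in> Gamma0_2_plus \<longleftrightarrow> (\<exists>A\<in>Gamma0_2_int. g = of_imat A \<or> g = of_imat A ** w2)"
  unfolding Gamma0_2_plus_def Gamma0_2_eq by blast

lemma of_imat_in_Gamma0_2_plus: "A \<in> Gamma0_2_int \<Longrightarrow> of_imat A \<in> Gamma0_2_plus"
  by (auto simp: Gamma0_2_plus_iff)

lemma of_imat_mult_w2_in_Gamma0_2_plus: "A \<in> Gamma0_2_int \<Longrightarrow> of_imat A ** w2 \<in> Gamma0_2_plus"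
  by (auto simp: Gamma0_2_plus_iff)

lemma Gamma0_2_subset_Gamma0_2_plus: "Gamma0_2 \<subseteq> Gamma0_2_plus"
  by (auto simp: Gamma0_2_plus_def)

lemma w2_in_Gamma0_2_plus: "w2 \<in> Gamma0_2_plus"
  using of_imat_mult_w2_in_Gamma0_2_plus [of "(1, 0, 0, 1)"] by (simp add: of_imat_one)

lemma minus_w2_in_Gamma0_2_plus: "- w2 \<in> Gamma0_2_plus"
  unfolding minus_w2_eq by (rule of_imat_mult_w2_in_Gamma0_2_plus) simp

lemma Gamma0_2_plus_mult:
  assumes "g \<in> Gamma0_2_plus" and "h \<in> Gamma0_2_plus"
  shows "g ** h \<in> Gamma0_2_plus"
proof -
  obtain A where A: "A \<in> Gamma0_2_int" and g: "g = of_imat A \<or> g = of_imat A ** w2"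
    using assms(1) by (auto simp: Gamma0_2_plus_iff)
  obtain B where B: "B \<in> Gamma0_2_int" and h: "h = of_imat B \<or> h = of_imat B ** w2"
    using assms(2) by (auto simp: Gamma0_2_plus_iff)
  obtain B' where B': "B' \<in> Gamma0_2_int" and swap: "w2 ** of_imat B = of_imat B' ** w2"
    using w2_conjugate_Gamma0_2_int [OF B] by blast
  have AB: "imat_mult A B \<in> Gamma0_2_int" and AB': "imat_mult A B' \<in> Gamma0_2_int"
    using A B B' by (simp_all add: Gamma0_2_int_mult)
  consider "g = of_imat A" "h = of_imat B" | "g = of_imat A" "h = of_imat B ** w2"
    | "g = of_imat A ** w2" "h = of_imat B" | "g = of_imat A ** w2" "h = of_imat B ** w2"
    using g h by blast
  then show ?thesis
  proof cases
    case 1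
    then show ?thesis
      using AB by (simp add: of_imat_mult of_imat_in_Gamma0_2_plus)
  next
    case 2
    then show ?thesis
      using AB by (simp add: matrix_mul_assoc of_imat_mult of_imat_mult_w2_in_Gamma0_2_plus)
  next
    case 3
    then have "g ** h = of_imat A ** (w2 ** of_imat B)"
      by (simp add: matrix_mul_assoc)
    also have "\<dots> = of_imat (imat_mult A B') ** w2"
      by (simp add: swap matrix_mul_assoc of_imat_mult)
    finally show ?thesis
      using AB' by (simp add: of_imat_mult_w2_in_Gamma0_2_plus)
  next
    case 4
    then have "g ** h = of_imat A ** (w2 ** of_imat B) ** w2"
      by (simp add: matrix_mul_assoc)
    also have "\<dots> = of_imat (imat_mult A B') ** (w2 ** w2)"
      by (simp add: swap matrix_mul_assoc of_imat_mult)
    also have "\<dots> = of_imat (imat_mult (imat_mult A B') (-1, 0, 0, -1))"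
      by (simp add: w2_mult_w2 of_imat_mult)
    finally show ?thesis
      using AB' by (simp add: of_imat_in_Gamma0_2_plus Gamma0_2_int_mult)
  qed
qed

section \<open>Double cosets\<close>

lemma double_coset_mult_left:
  assumes "\<And>g h. g \<in> G \<Longrightarrow> h \<in> G \<Longrightarrow> g ** h \<in> G"
    and "g \<in> G" and "X \<in> double_coset G a H"
  shows "g ** X \<in> double_coset G a H"
proof -
  obtain g' h where "g' \<in> G" "h \<in> H" "X = g' ** a ** h"
    using assms(3) unfolding double_coset_def by blast
  then show ?thesis
    using assms(1,2) unfolding double_coset_def by (metis (mono_tags, lifting) CollectI matrix_mul_assoc)
qed

lemma double_coset_eq_Union_right_cosets:
  assumes mult: "\<And>g h. g \<in> G \<Longrightarrow> h \<in> G \<Longrightarrow> g ** h \<in> G"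
    and reps: "M \<subseteq> double_coset G a H"
    and cover: "\<And>h. h \<in> H \<Longrightarrow> a ** h \<in> (\<Union>\<gamma>\<in>M. right_coset G \<gamma>)"
  shows "double_coset G a H = (\<Union>\<gamma>\<in>M. right_coset G \<gamma>)"
proof
  show "double_coset G a H \<subseteq> (\<Union>\<gamma>\<in>M. right_coset G \<gamma>)"
  proof
    fix X assume "X \<in> double_coset G a H"
    then obtain g h where g: "g \<in> G" and h: "h \<in> H" and X: "X = g ** (a ** h)"
      unfolding double_coset_def by (auto simp: matrix_mul_assoc)
    obtain \<gamma> g' where "\<gamma> \<in> M" "g' \<in> G" "a ** h = g' ** \<gamma>"
      using cover [OF h] unfolding right_coset_def by blast
    then show "X \<in> (\<Union>\<gamma>\<in>M. right_coset G \<gamma>)"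
      using X g mult unfolding right_coset_def by (auto simp: matrix_mul_assoc)
  qed
next
  show "(\<Union>\<gamma>\<in>M. right_coset G \<gamma>) \<subseteq> double_coset G a H"
    using reps double_coset_mult_left [OF mult] unfolding right_coset_def by blast
qed

lemma of_imat_in_double_coset:
  assumes "A \<in> int_double_coset D"
  shows "of_imat A \<in> double_coset Gamma0_2_plus (of_imat D) Gamma0_2"
proof -
  obtain g h where "g \<in> Gamma0_2_int" "h \<in> Gamma0_2_int" "A = imat_mult (imat_mult g D) h"
    using assms by (rule int_double_coset_E)
  then show ?thesis
    unfolding double_coset_def Gamma0_2_eq
    by (auto simp: of_imat_mult [symmetric] intro!: of_imat_in_Gamma0_2_plus)
qed

lemma of_imat_in_right_coset:
  assumes "g \<in> Gamma0_2_int"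
  shows "of_imat A \<in> right_coset Gamma0_2_plus (of_imat (imat_mult g A))"
proof -
  have "of_imat A = of_imat (imat_adj g) ** of_imat (imat_mult g A)"
    using assms by (simp add: of_imat_mult imat_adj_mult_cancel_left Gamma0_2_int_det)
  then show ?thesis
    unfolding right_coset_def using assms Gamma0_2_int_adj of_imat_in_Gamma0_2_plus by blast
qed

lemma primitive_scaled_rows:
  assumes "p * s - q * r = 1"
  shows "primitive (p, q, m * r, m * s)" and "primitive (m * p, m * q, r, s)"
proof -
  have "is_unit k" if "k dvd p \<and> k dvd q \<or> k dvd r \<and> k dvd s" for k
  proof -
    have "k dvd p * s - q * r"
      using that by auto
    then show ?thesis
      using assms by simp
  qed
  then show "primitive (p, q, m * r, m * s)" and "primitive (m * p, m * q, r, s)"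
    by (auto simp: primitive_def)
qed

lemma M1_eq: "M1 m = {of_imat (x, y, 0, z) | x y z. hermite_form m x y z \<and> odd x}"
  unfolding M1_def hermite_form_def of_imat.simps of_int_0 by (simp only: conj_assoc)

lemma S1_eq: "S1 m = {of_imat (x, y, 0, z) | x y z. hermite_form m x y z \<and> odd z}"
  unfolding S1_def hermite_form_def of_imat.simps of_int_0 by (simp only: conj_assoc)

lemma S2_eq:
  "S2 m = {(1 / sqrt 2) *\<^sub>R of_imat (x, y, 0, z) | x y z. hermite_form (2 * m) x y z \<and> even x \<and> even z}"
  unfolding S2_def hermite_form_def of_imat.simps of_int_0 by (simp only: conj_assoc)

lemma of_imat_diag:
  "of_imat (1, 0, 0, m) = mat2 1 0 0 (of_int m)" "of_imat (m, 0, 0, 1) = mat2 (of_int m) 0 0 1"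
  by (simp_all add: of_imat.simps)

lemma Gamma0_2_E:
  assumes "h \<in> Gamma0_2"
  obtains p q r s where "h = of_imat (p, q, r, s)" and "p * s - q * r = 1" and "even r"
proof -
  obtain A where A: "A \<in> Gamma0_2_int" "h = of_imat A"
    using assms unfolding Gamma0_2_eq by blast
  obtain p q r s where "A = (p, q, r, s)"
    by (cases A rule: prod_cases4)
  then show ?thesis
    using that A by simp
qed

lemma M1_subset_double_coset:
  assumes "even m"
  shows "M1 m \<subseteq> double_coset Gamma0_2_plus (mat2 1 0 0 (of_int m)) Gamma0_2"
proof
  fix \<gamma> assume "\<gamma> \<in> M1 m"
  then obtain x y z where \<gamma>: "\<gamma> = of_imat (x, y, 0, z)" and hf: "hermite_form m x y z" and "odd x"
    unfolding M1_eq by blast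
  then have "even z" "z \<noteq> 0" "gcd (gcd x y) z = 1" "x * z = m"
    using \<open>even m\<close> by (auto simp: hermite_form_def)
  then have "(x, y, 0, z) \<in> int_double_coset (1, 0, 0, m)"
    using upper_in_int_double_coset [of x z y] \<open>odd x\<close> by simp
  then show "\<gamma> \<in> double_coset Gamma0_2_plus (mat2 1 0 0 (of_int m)) Gamma0_2"
    unfolding \<gamma> of_imat_diag(1) [symmetric] by (rule of_imat_in_double_coset)
qed

lemma diag_1_m_mult_in_M1_cosets:
  assumes "m > 0" and "h \<in> Gamma0_2"
  shows "mat2 1 0 0 (of_int m) ** h \<in> (\<Union>\<gamma>\<in>M1 m. right_coset Gamma0_2_plus \<gamma>)"
proof -
  obtain p q r s where h: "h = of_imat (p, q, r, s)" and det: "p * s - q * r = 1" and "even r"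
    using assms(2) by (rule Gamma0_2_E)
  have prod: "mat2 1 0 0 (of_int m) ** h = of_imat (p, q, m * r, m * s)"
    unfolding h of_imat_diag(1) [symmetric] of_imat_mult by simp
  have "imat_det (p, q, m * r, m * s) = m"
    using det by (simp add: algebra_simps)
  moreover have "primitive (p, q, m * r, m * s)"
    using det by (rule primitive_scaled_rows)
  moreover have "odd p"
    using Gamma0_2_int_odd_diagonal(1) [of p q r s] det \<open>even r\<close> by simp
  moreover have "even (m * r)"
    using \<open>even r\<close> by simp
  ultimately obtain g x y z where g: "g \<in> Gamma0_2_int"
    and upper: "imat_mult g (p, q, m * r, m * s) = (x, y, 0, z)"
    and "hermite_form m x y z" and "odd x"
    using Gamma0_2_int_hermite_form_odd \<open>m > 0\<close> by blast
  then have "of_imat (imat_mult g (p, q, m * r, m * s)) \<in> M1 m"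
    unfolding M1_eq by auto
  then show ?thesis
    unfolding prod using of_imat_in_right_coset [OF g] by blast
qed

lemma M2_subset_double_coset:
  assumes "even m"
  shows "M2 m \<subseteq> double_coset Gamma0_2_plus (mat2 (of_int m) 0 0 1) Gamma0_2"
proof
  fix \<gamma> assume "\<gamma> \<in> M2 m"
  then consider (S1) "\<gamma> \<in> S1 m" | (S2) "\<gamma> \<in> S2 m"
    unfolding M2_def by blast
  then show "\<gamma> \<in> double_coset Gamma0_2_plus (mat2 (of_int m) 0 0 1) Gamma0_2"
  proof cases
    case S1
    then obtain x y z where \<gamma>: "\<gamma> = of_imat (x, y, 0, z)" and hf: "hermite_form m x y z" and "odd z"
      unfolding S1_eq by blast
    then have "(x, y, 0, z) \<in> int_double_coset (m, 0, 0, 1)"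
      using \<open>even m\<close> by (intro primitive_in_int_double_coset_m_1) (auto simp: hermite_form_def primitive_upper_iff)
    then show ?thesis
      unfolding \<gamma> of_imat_diag(2) [symmetric] by (rule of_imat_in_double_coset)
  next
    case S2
    then obtain x y z where \<gamma>: "\<gamma> = (1 / sqrt 2) *\<^sub>R of_imat (x, y, 0, z)"
      and hf: "hermite_form (2 * m) x y z" and "even x" and "even z"
      unfolding S2_eq by blast
    have "imat_det (0, -(z div 2), x, y) = m"
      using hf \<open>even z\<close> by (auto simp: hermite_form_def elim!: evenE)
    moreover have "odd y"
      using hf \<open>even x\<close> \<open>even z\<close> by (auto simp: hermite_form_def elim!: evenE)
    moreover have "primitive (0, -(z div 2), x, y)"
      unfolding primitive_def dvd_entries.simps
    proof (intro allI impI)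
      fix k assume "k dvd 0 \<and> k dvd -(z div 2) \<and> k dvd x \<and> k dvd y"
      moreover have "z div 2 dvd z"
        using \<open>even z\<close> by (auto elim!: evenE)
      ultimately have "k dvd gcd (gcd x y) z"
        by (meson dvd_minus_iff dvd_trans gcd_greatest)
      then show "is_unit k"
        using hf unfolding hermite_form_def by metis
    qed
    ultimately have "(0, -(z div 2), x, y) \<in> int_double_coset (m, 0, 0, 1)"
      using hf \<open>even m\<close> \<open>even x\<close> by (intro primitive_in_int_double_coset_m_1) (auto simp: hermite_form_def)
    then have "of_imat (0, -(z div 2), x, y) \<in> double_coset Gamma0_2_plus (mat2 (of_int m) 0 0 1) Gamma0_2"
      unfolding of_imat_diag(2) [symmetric] by (rule of_imat_in_double_coset)
    moreover have "\<gamma> = (- w2) ** of_imat (0, -(z div 2), x, y)"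
      unfolding \<gamma> w2_mult_scaled_upper [OF \<open>even z\<close>, symmetric] minus_w2_cancel ..
    ultimately show ?thesis
      using double_coset_mult_left [OF Gamma0_2_plus_mult minus_w2_in_Gamma0_2_plus] by simp
  qed
qed

lemma diag_m_1_mult_in_M2_cosets:
  assumes "m > 0" and "h \<in> Gamma0_2"
  shows "mat2 (of_int m) 0 0 1 ** h \<in> (\<Union>\<gamma>\<in>M2 m. right_coset Gamma0_2_plus \<gamma>)"
proof -
  obtain p q r s where h: "h = of_imat (p, q, r, s)" and det: "p * s - q * r = 1" and "even r"
    using assms(2) by (rule Gamma0_2_E)
  define A where "A = (m * p, m * q, r, s)"
  have prod: "mat2 (of_int m) 0 0 1 ** h = of_imat A"
    unfolding h A_def of_imat_diag(2) [symmetric] of_imat_mult by simp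
  have det_A: "imat_det (m * p, m * q, r, s) = m"
    using det by (simp add: algebra_simps)
  have prim_A: "primitive (m * p, m * q, r, s)"
    using det by (rule primitive_scaled_rows)
  have "odd s"
    using Gamma0_2_int_odd_diagonal(2) [of p q r s] det \<open>even r\<close> by simp
  show ?thesis
  proof (cases "even (r div gcd (m * p) r)")
    case True
    from det_A \<open>m > 0\<close> prim_A True obtain g y z where g: "g \<in> Gamma0_2_int"
      and upper: "imat_mult g A = (gcd (m * p) r, y, 0, z)" and hf: "hermite_form m (gcd (m * p) r) y z"
      unfolding A_def by (rule Gamma0_2_int_hermite_form)
    have "odd z"
      using Gamma0_2_int_mult_parity(3) [OF g \<open>even r\<close> upper [unfolded A_def]] \<open>odd s\<close> by simp
    then have "of_imat (imat_mult g A) \<in> M2 m"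
      unfolding upper M2_def S1_eq using hf by blast
    then show ?thesis
      unfolding prod using of_imat_in_right_coset [OF g] by blast
  next
    case False
    from det_A \<open>m > 0\<close> prim_A \<open>even r\<close> \<open>odd s\<close> False obtain g x y z where g: "g \<in> Gamma0_2_int"
      and upper: "imat_mult g (imat_mult (0, -1, 2, 0) A) = (x, y, 0, z)"
      and hf: "hermite_form (2 * m) x y z" and "even x" and "even z"
      unfolding A_def by (rule Gamma0_2_int_hermite_form_w2)
    define \<gamma> where "\<gamma> = (1 / sqrt 2) *\<^sub>R of_imat (x, y, 0, z)"
    have "\<gamma> \<in> M2 m"
      unfolding \<gamma>_def M2_def S2_eq using hf \<open>even x\<close> \<open>even z\<close> by blast
    have "imat_mult (0, -1, 2, 0) A = imat_mult (imat_adj g) (x, y, 0, z)"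
      using g by (simp add: upper [symmetric] imat_adj_mult_cancel_left Gamma0_2_int_det)
    then have "w2 ** of_imat A = of_imat (imat_adj g) ** \<gamma>"
      by (simp add: w2_mult_of_imat \<gamma>_def of_imat_mult_scaleR)
    then have "of_imat A = ((- w2) ** of_imat (imat_adj g)) ** \<gamma>"
      by (metis minus_w2_cancel matrix_mul_assoc)
    moreover have "(- w2) ** of_imat (imat_adj g) \<in> Gamma0_2_plus"
      using g by (simp add: Gamma0_2_plus_mult minus_w2_in_Gamma0_2_plus of_imat_in_Gamma0_2_plus
          Gamma0_2_int_adj)
    ultimately show ?thesis
      unfolding prod right_coset_def using \<open>\<gamma> \<in> M2 m\<close> by blast
  qed
qed

lemma diag_1_m_mult_w2: "mat2 1 0 0 a ** w2 = w2 ** mat2 a 0 0 1"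
  unfolding w2_eq by (simp add: mat2_mult mat2_eq_iff)

lemma diag_m_1_mult_w2: "mat2 a 0 0 1 ** w2 = w2 ** mat2 1 0 0 a"
  unfolding w2_eq by (simp add: mat2_mult mat2_eq_iff)

lemma double_coset_Gamma0_2_plus_split:
  assumes a: "a ** w2 = w2 ** a'"
  shows "double_coset Gamma0_2_plus a Gamma0_2_plus =
           double_coset Gamma0_2_plus a Gamma0_2 \<union> double_coset Gamma0_2_plus a' Gamma0_2"
proof (intro equalityI subsetI)
  fix X assume "X \<in> double_coset Gamma0_2_plus a Gamma0_2_plus"
  then obtain g h where g: "g \<in> Gamma0_2_plus" and h: "h \<in> Gamma0_2_plus" and X: "X = g ** a ** h"
    unfolding double_coset_def by blast
  obtain B where B: "B \<in> Gamma0_2_int" and "h = of_imat B \<or> h = of_imat B ** w2"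
    using h by (auto simp: Gamma0_2_plus_iff)
  then consider "h = of_imat B" | "h = of_imat B ** w2"
    by blast
  then show "X \<in> double_coset Gamma0_2_plus a Gamma0_2 \<union> double_coset Gamma0_2_plus a' Gamma0_2"
  proof cases
    case 1
    then have "h \<in> Gamma0_2"
      using B by (simp add: Gamma0_2_eq)
    then show ?thesis
      using g X unfolding double_coset_def by blast
  next
    case 2
    obtain B' where B': "B' \<in> Gamma0_2_int" and swap: "of_imat B ** w2 = w2 ** of_imat B'"
      using w2_conjugate_Gamma0_2_int [OF B] by blast
    have "X = g ** (a ** w2) ** of_imat B'"
      using X 2 swap by (simp add: matrix_mul_assoc)
    also have "\<dots> = (g ** w2) ** a' ** of_imat B'"
      by (simp add: a matrix_mul_assoc)
    moreover have "g ** w2 \<in> Gamma0_2_plus" "of_imat B' \<in> Gamma0_2"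
      using g B' by (simp_all add: Gamma0_2_plus_mult w2_in_Gamma0_2_plus Gamma0_2_eq)
    ultimately show ?thesis
      unfolding double_coset_def by blast
  qed
next
  fix X assume "X \<in> double_coset Gamma0_2_plus a Gamma0_2 \<union> double_coset Gamma0_2_plus a' Gamma0_2"
  then consider "X \<in> double_coset Gamma0_2_plus a Gamma0_2" | "X \<in> double_coset Gamma0_2_plus a' Gamma0_2"
    by blast
  then show "X \<in> double_coset Gamma0_2_plus a Gamma0_2_plus"
  proof cases
    case 1
    then show ?thesis
      using Gamma0_2_subset_Gamma0_2_plus unfolding double_coset_def by blast
  next
    case 2
    then obtain g h where g: "g \<in> Gamma0_2_plus" and h: "h \<in> Gamma0_2" and X: "X = g ** a' ** h"
      unfolding double_coset_def by blast
    have "a' = (- w2) ** (a ** w2)"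
      using minus_w2_cancel [of a'] a by simp
    then have "X = (g ** (- w2)) ** a ** (w2 ** h)"
      using X by (simp add: matrix_mul_assoc)
    moreover have "g ** (- w2) \<in> Gamma0_2_plus" "w2 ** h \<in> Gamma0_2_plus"
      using g h Gamma0_2_subset_Gamma0_2_plus
      by (auto intro: Gamma0_2_plus_mult minus_w2_in_Gamma0_2_plus w2_in_Gamma0_2_plus)
    ultimately show ?thesis
      unfolding double_coset_def by blast
  qed
qed

theorem proposition2p1:
  fixes m :: int
  assumes "m > 0" and "even m"
  shows "(double_coset Gamma0_2_plus (mat2 1 0 0 (of_int m)) Gamma0_2
           = (\<Union>\<gamma>\<in>M1 m. right_coset Gamma0_2_plus \<gamma>)) \<and>
         (double_coset Gamma0_2_plus (mat2 (of_int m) 0 0 1) Gamma0_2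
           = (\<Union>\<gamma>\<in>M2 m. right_coset Gamma0_2_plus \<gamma>)) \<and>
         (double_coset Gamma0_2_plus (mat2 (of_int m) 0 0 1) Gamma0_2_plus
           = double_coset Gamma0_2_plus (mat2 1 0 0 (of_int m)) Gamma0_2_plus) \<and>
         (double_coset Gamma0_2_plus (mat2 1 0 0 (of_int m)) Gamma0_2_plus
           = (\<Union>\<gamma>\<in>Mm m. right_coset Gamma0_2_plus \<gamma>))"
proof -
  have M1: "double_coset Gamma0_2_plus (mat2 1 0 0 (of_int m)) Gamma0_2
           = (\<Union>\<gamma>\<in>M1 m. right_coset Gamma0_2_plus \<gamma>)"
    using Gamma0_2_plus_mult M1_subset_double_coset [OF \<open>even m\<close>]
      diag_1_m_mult_in_M1_cosets [OF \<open>m > 0\<close>]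
    by (rule double_coset_eq_Union_right_cosets)
  have M2: "double_coset Gamma0_2_plus (mat2 (of_int m) 0 0 1) Gamma0_2
           = (\<Union>\<gamma>\<in>M2 m. right_coset Gamma0_2_plus \<gamma>)"
    using Gamma0_2_plus_mult M2_subset_double_coset [OF \<open>even m\<close>]
      diag_m_1_mult_in_M2_cosets [OF \<open>m > 0\<close>]
    by (rule double_coset_eq_Union_right_cosets)
  have "double_coset Gamma0_2_plus (mat2 1 0 0 (of_int m)) Gamma0_2_plus =
      double_coset Gamma0_2_plus (mat2 1 0 0 (of_int m)) Gamma0_2 \<union>
      double_coset Gamma0_2_plus (mat2 (of_int m) 0 0 1) Gamma0_2"
    by (rule double_coset_Gamma0_2_plus_split [OF diag_1_m_mult_w2])
  moreover have "double_coset Gamma0_2_plus (mat2 (of_int m) 0 0 1) Gamma0_2_plus =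
      double_coset Gamma0_2_plus (mat2 (of_int m) 0 0 1) Gamma0_2 \<union>
      double_coset Gamma0_2_plus (mat2 1 0 0 (of_int m)) Gamma0_2"
    by (rule double_coset_Gamma0_2_plus_split [OF diag_m_1_mult_w2])
  ultimately show ?thesis
    unfolding M1 M2 Mm_def UN_Un by (simp add: Un_commute)
qed

end
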